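(* Let $f$ be a modulus function, $\beta\in(0,1]$, $m\ge0$ an integer, $\theta=(k_r)$ a lacunary sequence, and $p=(p_k)$ a sequence of positive reals with $0<h=\inf_kp_k\le p_k\le\sup_kp_k=H<\infty$ such that $\lim_kp_k$ exists and is $>0$. If a sequence $X=(X_k)$ of fuzzy numbers satisfies $\lim_r\frac{1}{h_r^\beta}\sum_{k\in I_r}[f(d(\Delta^mX_k,X'))]^{p_k}=0$ and $\lim_r\frac{1}{h_r^\beta}\sum_{k\in I_r}[f(d(\Delta^mX_k,X''))]^{p_k}=0$ for fuzzy numbers $X',X''$, then $X'=X''$; i.e., the $w_p^\beta(\theta,f,F,\Delta^m)$-limit is unique.
   Context: A fuzzy number is a map $X:\mathbb{R}\to[0,1]$ which is normal, fuzzy convex, upper semicontinuous, with compact closure of $\{t:X(t)>0\}$; $L(\mathbb{R})$ is the set of fuzzy numbers. Level sets $[X]^\alpha=\{t:X(t)\ge\alpha\}$ ($\alpha\in(0,1]$), $[X]^0=\overline{\{t:X(t)>0\}}$, are compact intervals $[u^\alpha,v^\alpha]$. Subtraction: $[X-Y]^\alpha=[u_1^\alpha-v_2^\alpha,v_1^\alpha-u_2^\alpha]$. Metric: $d(X,Y)=\sup_{\alpha\in[0,1]}\max\{|u_1^\alpha-u_2^\alpha|,|v_1^\alpha-v_2^\alpha|\}$. $(\Delta^0X)_k=X_k$, $(\Delta^1X)_k=X_k-X_{k+1}$, $(\Delta^mX)_k=(\Delta^1(\Delta^{m-1}X))_k$. A lacunary sequence is an increasing integer sequence $\theta=(k_r)_{r\ge0}$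 with $k_0=0$, $h_r=k_r-k_{r-1}\to\infty$; $I_r=(k_{r-1},k_r]$. A modulus function is $f:[0,\infty)\to[0,\infty)$ with $f(x)=0$ iff $x=0$, $f(x+y)\le f(x)+f(y)$, $f$ increasing, and $f$ right-continuous at $0$. *)

theory Defs
  imports "HOL-Analysis.Analysis"
begin

type_synonym fuzzy = "real \<Rightarrow> real"

definition fuzzy_number :: "fuzzy \<Rightarrow> bool" where
  "fuzzy_number X \<longleftrightarrow>
     (\<forall>t. 0 \<le> X t \<and> X t \<le> 1) \<and>
     (\<exists>t. X t = 1) \<and>
     (\<forall>s t (l::real). 0 \<le> l \<and> l \<le> 1 \<longrightarrow> X (l * s + (1 - l) * t) \<ge> min (X s) (X t)) \<and>
     (\<forall>a. open {t. X t < a}) \<and>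
     compact (closure {t. X t > 0})"

definition level :: "fuzzy \<Rightarrow> real \<Rightarrow> real set" where
  "level X a = (if a > 0 then {t. X t \<ge> a} else closure {t. X t > 0})"

definition lo :: "fuzzy \<Rightarrow> real \<Rightarrow> real" where
  "lo X a = Inf (level X a)"

definition hi :: "fuzzy \<Rightarrow> real \<Rightarrow> real" where
  "hi X a = Sup (level X a)"

text \<open>Subtraction: the fuzzy number whose a-level set is [lo X a - hi Y a, hi X a - lo Y a].\<close>
definition fsub :: "fuzzy \<Rightarrow> fuzzy \<Rightarrow> fuzzy" where
  "fsub X Y = (\<lambda>t. Sup ({0} \<union> {a \<in> {0<..1}. lo X a - hi Y a \<le> t \<and> t \<le> hi X a - lo Y a}))"

definition fdist :: "fuzzy \<Rightarrow> fuzzy \<Rightarrow> real" where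
  "fdist X Y = (SUP a\<in>{0..1}. max \<bar>lo X a - lo Y a\<bar> \<bar>hi X a - hi Y a\<bar>)"

fun fdelta :: "nat \<Rightarrow> (nat \<Rightarrow> fuzzy) \<Rightarrow> nat \<Rightarrow> fuzzy" where
  "fdelta 0 X k = X k"
| "fdelta (Suc m) X k = fsub (fdelta m X k) (fdelta m X (Suc k))"

definition lacunary :: "(nat \<Rightarrow> nat) \<Rightarrow> bool" where
  "lacunary th \<longleftrightarrow> strict_mono th \<and> th 0 = 0 \<and>
     filterlim (\<lambda>r. real (th (Suc r) - th r)) at_top sequentially"

definition modulus :: "(real \<Rightarrow> real) \<Rightarrow> bool" where
  "modulus f \<longleftrightarrow>
     (\<forall>x\<ge>0. f x \<ge> 0) \<and>
     (\<forall>x\<ge>0. f x = 0 \<longleftrightarrow> x = 0) \<and>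
     (\<forall>x\<ge>0. \<forall>y\<ge>0. f (x + y) \<le> f x + f y) \<and>
     mono_on {0..} f \<and>
     (f \<longlongrightarrow> 0) (at_right 0)"

text \<open>(1/h_r^beta) * sum over I_r of f(d(Delta^m X_k, L))^(p_k), with r shifted by one (r >= 1).\<close>
definition wsum :: "(real \<Rightarrow> real) \<Rightarrow> real \<Rightarrow> nat \<Rightarrow> (nat \<Rightarrow> nat) \<Rightarrow> (nat \<Rightarrow> real)
    \<Rightarrow> (nat \<Rightarrow> fuzzy) \<Rightarrow> fuzzy \<Rightarrow> nat \<Rightarrow> real" where
  "wsum f \<beta> m th p X L r =
     (1 / (real (th (Suc r) - th r)) powr \<beta>) *
     (\<Sum>k\<in>{th r<..th (Suc r)}. (f (fdist (fdelta m X k) L)) powr (p k))"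

end

theory Submission imports Defs begin

text \<open>If X' and X'' differ, then d = d(X',X'') > 0. For every k the triangle inequality,
  monotonicity and subadditivity of f give f(d) <= f(d(Delta^m X_k, X')) + f(d(Delta^m X_k, X'')),
  so one of the two summands is at least f(d)/2 and the k-th terms of the two sums add up to at
  least e = min ((f(d)/2)^h) ((f(d)/2)^H) > 0. Since h_r^beta <= h_r, the two block means add up
  to at least e for every r, contradicting their convergence to 0. That d = 0 forces X' = X''
  holds because a fuzzy number is determined by the endpoints of its level sets.\<close>

definition bounded_levels :: "fuzzy \<Rightarrow> bool" where
  "bounded_levels Z \<longleftrightarrow> (\<exists>M. \<forall>a. \<bar>lo Z a\<bar> \<le> M \<and> \<bar>hi Z a\<bar> \<le> M)"

text \<open>The empty set has an unspecified infimum and supremum in the reals, so they enter the bound.\<close>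
lemma abs_Inf_Sup_le_if_subset:
  fixes S :: "real set"
  assumes "S \<subseteq> {-M..M}"
  shows "\<bar>Inf S\<bar> \<le> max M (max \<bar>Inf {}\<bar> \<bar>Sup ({}::real set)\<bar>)"
    and "\<bar>Sup S\<bar> \<le> max M (max \<bar>Inf {}\<bar> \<bar>Sup ({}::real set)\<bar>)"
proof -
  have "\<bar>Inf S\<bar> \<le> M \<and> \<bar>Sup S\<bar> \<le> M" if "S \<noteq> {}"
  proof -
    obtain x where x: "x \<in> S" using \<open>S \<noteq> {}\<close> by auto
    have "bdd_below S" "bdd_above S"
      using assms by (auto intro: bdd_below_mono bdd_above_mono)
    then have "Inf S \<le> x" "x \<le> Sup S" using x by (auto intro: cInf_lower cSup_upper)
    moreover have "-M \<le> Inf S" "Sup S \<le> M"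
      using that assms by (auto intro!: cInf_greatest cSup_least)
    ultimately show ?thesis using x assms by (auto simp: abs_le_iff)
  qed
  then show "\<bar>Inf S\<bar> \<le> max M (max \<bar>Inf {}\<bar> \<bar>Sup ({}::real set)\<bar>)"
    and "\<bar>Sup S\<bar> \<le> max M (max \<bar>Inf {}\<bar> \<bar>Sup ({}::real set)\<bar>)"
    by (cases "S = {}"; force)+
qed

lemma bounded_levels_if_bounded_support:
  assumes "bounded {t. Z t > 0}"
  shows "bounded_levels Z"
proof -
  obtain M where M: "\<forall>t\<in>closure {t. Z t > 0}. \<bar>t\<bar> \<le> M"
    using bounded_closure[OF assms] unfolding bounded_real by blast
  have "level Z a \<subseteq> closure {t. Z t > 0}" for a
    using closure_subset[of "{t. Z t > 0}"] by (auto simp: level_def)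
  then have "level Z a \<subseteq> {-M..M}" for a
    using M by (fastforce simp: abs_le_iff)
  then show ?thesis
    unfolding bounded_levels_def lo_def hi_def using abs_Inf_Sup_le_if_subset by blast
qed

lemma bounded_support_fsub:
  assumes "bounded_levels Z" "bounded_levels W"
  shows "bounded {t. fsub Z W t > 0}"
proof -
  obtain M1 where M1: "\<And>a. \<bar>lo Z a\<bar> \<le> M1 \<and> \<bar>hi Z a\<bar> \<le> M1"
    using assms(1) unfolding bounded_levels_def by auto
  obtain M2 where M2: "\<And>a. \<bar>lo W a\<bar> \<le> M2 \<and> \<bar>hi W a\<bar> \<le> M2"
    using assms(2) unfolding bounded_levels_def by auto
  have "\<bar>t\<bar> \<le> M1 + M2" if "fsub Z W t > 0" for t
  proof -
    have "{a \<in> {0<..1}. lo Z a - hi W a \<le> t \<and> t \<le> hi Z a - lo W a} \<noteq> {}"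
      using that unfolding fsub_def by (metis Un_empty_right cSup_singleton less_irrefl)
    then obtain a where "lo Z a - hi W a \<le> t" "t \<le> hi Z a - lo W a" by auto
    with M1[of a] M2[of a] show ?thesis by (auto simp: abs_le_iff)
  qed
  then show ?thesis unfolding bounded_real by blast
qed

lemma fuzzy_number_bounded_support:
  assumes "fuzzy_number Z"
  shows "bounded {t. Z t > 0}"
  using assms unfolding fuzzy_number_def
  by (meson bounded_subset closure_subset compact_imp_bounded)

lemma bounded_levels_fdelta:
  assumes "\<And>k. bounded {t. X k t > 0}"
  shows "bounded_levels (fdelta m X k)"
proof (induction m arbitrary: k)
  case 0
  then show ?case using assms by (simp add: bounded_levels_if_bounded_support)
next
  case (Suc m)
  then show ?case by (simp add: bounded_support_fsub bounded_levels_if_bounded_support)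
qed

lemma
  assumes "bounded_levels A" "bounded_levels B"
  shows fdist_ge_level: "a \<in> {0..1} \<Longrightarrow> max \<bar>lo A a - lo B a\<bar> \<bar>hi A a - hi B a\<bar> \<le> fdist A B"
    and fdist_nonneg: "0 \<le> fdist A B"
proof -
  obtain M1 where M1: "\<And>a. \<bar>lo A a\<bar> \<le> M1 \<and> \<bar>hi A a\<bar> \<le> M1"
    using assms(1) unfolding bounded_levels_def by auto
  obtain M2 where M2: "\<And>a. \<bar>lo B a\<bar> \<le> M2 \<and> \<bar>hi B a\<bar> \<le> M2"
    using assms(2) unfolding bounded_levels_def by auto
  have "max \<bar>lo A a - lo B a\<bar> \<bar>hi A a - hi B a\<bar> \<le> M1 + M2" for a
    using M1[of a] M2[of a] by (simp add: abs_le_iff)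
  then have "bdd_above ((\<lambda>a. max \<bar>lo A a - lo B a\<bar> \<bar>hi A a - hi B a\<bar>) ` {0..1})"
    by (intro bdd_aboveI2)
  then show le: "max \<bar>lo A a - lo B a\<bar> \<bar>hi A a - hi B a\<bar> \<le> fdist A B" if "a \<in> {0..1}" for a
    unfolding fdist_def using that by (rule cSUP_upper[rotated])
  show "0 \<le> fdist A B" using le[of 0] by (simp del: max.bounded_iff)
qed

lemma fdist_triangle:
  assumes "bounded_levels A" "bounded_levels B" "bounded_levels C"
  shows "fdist B C \<le> fdist A B + fdist A C"
  unfolding fdist_def[of B C]
proof (rule cSUP_least)
  fix a :: real assume a: "a \<in> {0..1}"
  show "max \<bar>lo B a - lo C a\<bar> \<bar>hi B a - hi C a\<bar> \<le> fdist A B + fdist A C"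
    using fdist_ge_level[OF assms(1,2) a] fdist_ge_level[OF assms(1,3) a] by linarith
qed simp

lemma fuzzy_number_ge_iff_level:
  assumes X: "fuzzy_number X" and a: "0 < a" "a \<le> 1"
  shows "a \<le> X t \<longleftrightarrow> lo X a \<le> t \<and> t \<le> hi X a"
proof -
  define S where "S = {t. a \<le> X t}"
  have level: "level X a = S" unfolding level_def S_def using a by simp
  have "S = - {t. X t < a}" unfolding S_def by auto
  then have "closed S" using X unfolding fuzzy_number_def by (simp add: closed_def)
  moreover have "bounded S"
  proof (rule bounded_subset)
    show "bounded {t. X t > 0}" using X by (rule fuzzy_number_bounded_support)
    show "S \<subseteq> {t. X t > 0}" unfolding S_def using a by auto
  qed
  then have bdd: "bdd_below S" "bdd_above S"
    by (simp_all add: bounded_imp_bdd_below bounded_imp_bdd_above)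
  moreover have "S \<noteq> {}"
    using X a unfolding S_def fuzzy_number_def by (metis empty_Collect_eq)
  ultimately have lo_in: "lo X a \<in> S" and hi_in: "hi X a \<in> S"
    unfolding lo_def hi_def level by (simp_all add: closed_contains_Inf closed_contains_Sup)
  show ?thesis
  proof
    assume "a \<le> X t"
    then show "lo X a \<le> t \<and> t \<le> hi X a"
      using bdd unfolding lo_def hi_def level S_def by (simp add: cInf_lower cSup_upper)
  next
    assume t: "lo X a \<le> t \<and> t \<le> hi X a"
    show "a \<le> X t"
    proof (cases "lo X a = hi X a")
      case True
      then have "t = lo X a" using t by simp
      then show ?thesis using lo_in unfolding S_def by simp
    next
      case False
      then have lt: "lo X a < hi X a" using t by simp
      define l where "l = (hi X a - t) / (hi X a - lo X a)"
      have l: "0 \<le> l" "l \<le> 1" unfolding l_def using t lt by (auto simp: field_simps)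
      have "t = l * lo X a + (1 - l) * hi X a"
        unfolding l_def using lt by (simp add: divide_simps) (simp add: algebra_simps)
      then have "min (X (lo X a)) (X (hi X a)) \<le> X t"
        using X l unfolding fuzzy_number_def by metis
      then show ?thesis using lo_in hi_in unfolding S_def by simp
    qed
  qed
qed

lemma fuzzy_number_eq_if_fdist_le_0:
  assumes X: "fuzzy_number X" and Y: "fuzzy_number Y" and "fdist X Y \<le> 0"
  shows "X = Y"
proof
  fix t
  have levels: "bounded_levels X" "bounded_levels Y"
    using X Y by (simp_all add: bounded_levels_if_bounded_support fuzzy_number_bounded_support)
  have "lo X a = lo Y a \<and> hi X a = hi Y a" if "a \<in> {0..1}" for a
    using fdist_ge_level[OF levels that] assms(3) by linarith
  then have same_levels: "a \<le> X t \<longleftrightarrow> a \<le> Y t" if "0 < a" "a \<le> 1" for a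
    using fuzzy_number_ge_iff_level[OF X that] fuzzy_number_ge_iff_level[OF Y that] that by simp
  have "0 \<le> X t" "X t \<le> 1" "0 \<le> Y t" "Y t \<le> 1"
    using X Y unfolding fuzzy_number_def by auto
  then show "X t = Y t"
    using same_levels[of "X t"] same_levels[of "Y t"] by (cases "X t = 0"; cases "Y t = 0") auto
qed

lemma fdist_pos:
  assumes "fuzzy_number X" "fuzzy_number Y" "X \<noteq> Y"
  shows "0 < fdist X Y"
  using fuzzy_number_eq_if_fdist_le_0[OF assms(1,2)] assms(3) by force

lemma modulus_pos:
  assumes "modulus f" "0 < x"
  shows "0 < f x"
  using assms unfolding modulus_def by (metis less_eq_real_def)

lemma modulus_half_le_powr_add:
  assumes "modulus f" "0 \<le> d" "0 \<le> a" "0 \<le> b" "d \<le> a + b"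
    and "h \<le> q" "q \<le> H" "0 \<le> q"
  shows "min ((f d / 2) powr h) ((f d / 2) powr H) \<le> f a powr q + f b powr q"
proof -
  let ?c = "f d / 2"
  have f: "\<And>x. 0 \<le> x \<Longrightarrow> 0 \<le> f x" "mono_on {0..} f"
    "f (a + b) \<le> f a + f b"
    using assms(1,3,4) unfolding modulus_def by simp_all
  have "f d \<le> f (a + b)" using assms(2-5) by (intro mono_onD[OF f(2)]) auto
  then have "?c \<le> f a \<or> ?c \<le> f b" using f(3) by linarith
  moreover have "0 \<le> ?c" using f(1)[OF assms(2)] by simp
  ultimately have "?c powr q \<le> f a powr q \<or> ?c powr q \<le> f b powr q"
    using powr_mono2[OF assms(8)] by blast
  then have "?c powr q \<le> f a powr q + f b powr q"
    using powr_ge_zero[of "f a" q] powr_ge_zero[of "f b" q] by linarith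
  moreover have "min (?c powr h) (?c powr H) \<le> ?c powr q"
  proof (cases "1 \<le> ?c")
    case True
    then show ?thesis using powr_mono[OF assms(6) True] by linarith
  next
    case False
    then show ?thesis using powr_mono'[OF assms(7), of ?c] f(1)[OF assms(2)] by linarith
  qed
  ultimately show ?thesis by linarith
qed

lemma modulus_fdist_powr_ge:
  assumes "modulus f" "bounded_levels A" "bounded_levels B" "bounded_levels C"
    and "h \<le> q" "q \<le> H" "0 \<le> q"
  shows "min ((f (fdist B C) / 2) powr h) ((f (fdist B C) / 2) powr H)
    \<le> f (fdist A B) powr q + f (fdist A C) powr q"
proof (rule modulus_half_le_powr_add[OF assms(1) _ _ _ _ assms(5-7)])
  show "fdist B C \<le> fdist A B + fdist A C" using assms(2-4) by (rule fdist_triangle)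
  show "0 \<le> fdist B C" "0 \<le> fdist A B" "0 \<le> fdist A C"
    using assms(2-4) by (simp_all add: fdist_nonneg)
qed

lemma block_mean_ge:
  fixes th :: "nat \<Rightarrow> nat" and T :: "nat \<Rightarrow> real"
  assumes "strict_mono th" "\<beta> \<le> 1" "0 \<le> e" "\<And>k. e \<le> T k"
  shows "e \<le> 1 / real (th (Suc r) - th r) powr \<beta> * (\<Sum>k\<in>{th r<..th (Suc r)}. T k)"
proof -
  define hr where "hr = real (th (Suc r) - th r)"
  have "th r < th (Suc r)" using assms(1) by (rule strict_monoD) simp
  then have hr: "1 \<le> hr" unfolding hr_def by simp
  have "hr powr \<beta> \<le> hr" using powr_mono[OF assms(2) hr] hr by simp
  then have "hr powr \<beta> * e \<le> hr * e" using assms(3) by (rule mult_right_mono)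
  also have "\<dots> \<le> (\<Sum>k\<in>{th r<..th (Suc r)}. T k)"
    using sum_bounded_below[of "{th r<..th (Suc r)}" e T] assms(4) unfolding hr_def by simp
  finally have "e * hr powr \<beta> \<le> (\<Sum>k\<in>{th r<..th (Suc r)}. T k)" by (simp add: mult.commute)
  moreover have "0 < hr powr \<beta>" using hr by simp
  ultimately show ?thesis unfolding hr_def[symmetric] by (simp add: pos_le_divide_eq)
qed

theorem theorem3p4:
  fixes f :: "real \<Rightarrow> real" and \<beta> :: real and m :: nat and th :: "nat \<Rightarrow> nat"
    and p :: "nat \<Rightarrow> real" and X :: "nat \<Rightarrow> fuzzy" and X' X'' :: fuzzy
  assumes "modulus f"
    and "0 < \<beta>" and "\<beta> \<le> 1"
    and "lacunary th"
    and "\<forall>k. p k > 0"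
    and "(INF k. p k) > 0" and "bdd_above (range p)"
    and "convergent p" and "lim p > 0"
    and "\<forall>k. fuzzy_number (X k)"
    and "fuzzy_number X'" and "fuzzy_number X''"
    and "wsum f \<beta> m th p X X' \<longlonglongrightarrow> 0"
    and "wsum f \<beta> m th p X X'' \<longlonglongrightarrow> 0"
  shows "X' = X''"
proof (rule ccontr)
  assume "X' \<noteq> X''"
  have levels: "bounded_levels X'" "bounded_levels X''" "\<And>k. bounded_levels (fdelta m X k)"
    using assms(10-12)
    by (simp_all add: bounded_levels_if_bounded_support bounded_levels_fdelta fuzzy_number_bounded_support)
  have "0 < f (fdist X' X'')"
    using assms(1,11,12) \<open>X' \<noteq> X''\<close> by (simp add: fdist_pos modulus_pos)
  obtain H where H: "\<And>k. p k \<le> H" using assms(7) by (auto simp: bdd_above_def)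
  have "bdd_below (range p)" using assms(5) by (intro bdd_belowI2[where m = 0]) (simp add: less_imp_le)
  then have h: "(INF k. p k) \<le> p k" for k by (rule cINF_lower) simp
  define e where "e = min ((f (fdist X' X'') / 2) powr (INF k. p k)) ((f (fdist X' X'') / 2) powr H)"
  have "0 < e" unfolding e_def using \<open>0 < f (fdist X' X'')\<close> by simp
  have terms_ge: "e \<le> f (fdist (fdelta m X k) X') powr p k + f (fdist (fdelta m X k) X'') powr p k"
    for k unfolding e_def using assms(1) levels h H assms(5)
    by (simp add: modulus_fdist_powr_ge less_imp_le)
  have "strict_mono th" using assms(4) by (simp add: lacunary_def)
  from block_mean_ge[OF this assms(3) _ terms_ge] \<open>0 < e\<close>
  have "e \<le> wsum f \<beta> m th p X X' r + wsum f \<beta> m th p X X'' r" for r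
    by (simp only: wsum_def sum.distrib distrib_left less_imp_le)
  then have "e \<le> 0"
    using LIMSEQ_le_const[OF tendsto_add[OF assms(13,14)]] by simp
  then show False using \<open>0 < e\<close> by simp
qed

end
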